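(* Let $\mathcal{S}\subseteq 2^{[n]}$ be a Sperner family and let $A\subseteq[n]$ be a fixed set. Define $h_A:\mathcal{S}\to 2^{[n]}$ by $h_A(S)=S\cap A$. Then $\mathcal{F}(\mathcal{S},h_A)$ is s-extremal. Moreover, if $\mathcal{F}(\mathcal{S},h_A)\neq 2^{[n]}$, then there exists a set $F\subseteq[n]$ with $F\notin\mathcal{F}(\mathcal{S},h_A)$ such that $\mathcal{F}'=\mathcal{F}(\mathcal{S},h_A)\cup\{F\}$ is again s-extremal, and furthermore $\mathcal{F}'=\mathcal{F}(\mathcal{S}',h_A)$ for some suitable Sperner family $\mathcal{S}'\subseteq 2^{[n]}$ (where $h_A(S)=S\cap A$ on $\mathcal{S}'$).
   Context: $[n]=\{1,\dots,n\}$. A family $\mathcal{S}\subseteq 2^{[n]}$ is a Sperner family if no member is contained in another member. A family $\mathcal{F}\subseteq 2^{[n]}$ shatters $S\subseteq[n]$ if $\{F\cap S: F\in\mathcal{F}\}=2^S$; $\mathrm{Sh}(\mathcal{F})$ denotes the family of sets shattered by $\mathcal{F}$. $\mathcal{F}$ is s-extremal if $|\mathrm{Sh}(\mathcal{F})|=|\mathcal{F}|$. For $H\subseteq S\subseteq[n]$ let $\mathcal{Q}_{S,H}=\{H\cup B: B\subseteq [n]\setminus S\}$ (the sets whose intersection with $S$ is $H$). For a Sperner family $\mathcal{S}$ and a function $h:\mathcal{S}\to 2^{[n]}$ with $h(S)\subseteq S$ for all $S\in\mathcal{S}$, put $\mathcal{F}(\mathcal{S},h)=2^{[n]}\setminus\bigcup_{S\in\mathcal{S}}\mathcal{Q}_{S,h(S)}$.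 *)

theory Defs
  imports Main
begin

definition sperner :: "nat set set \<Rightarrow> bool" where
  "sperner \<S> \<longleftrightarrow> (\<forall>S\<in>\<S>. \<forall>T\<in>\<S>. S \<subseteq> T \<longrightarrow> S = T)"

definition shatters :: "nat set set \<Rightarrow> nat set \<Rightarrow> bool" where
  "shatters \<F> S \<longleftrightarrow> (\<lambda>F. F \<inter> S) ` \<F> = Pow S"

definition Sh :: "nat \<Rightarrow> nat set set \<Rightarrow> nat set set" where
  "Sh n \<F> = {S. S \<subseteq> {1..n} \<and> shatters \<F> S}"

definition s_extremal :: "nat \<Rightarrow> nat set set \<Rightarrow> bool" where
  "s_extremal n \<F> \<longleftrightarrow> card (Sh n \<F>) = card \<F>"

definition Q :: "nat \<Rightarrow> nat set \<Rightarrow> nat set \<Rightarrow> nat set set" where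
  "Q n S H = {H \<union> B | B. B \<subseteq> {1..n} - S}"

definition FF :: "nat \<Rightarrow> nat set set \<Rightarrow> (nat set \<Rightarrow> nat set) \<Rightarrow> nat set set" where
  "FF n \<S> h = Pow {1..n} - (\<Union>S\<in>\<S>. Q n S (h S))"

end

theory Submission
  imports Defs
begin

text \<open>With \<open>C = [n] - A\<close>, a set \<open>X\<close> lies in \<open>\<Q>\<^bsub>S,S\<inter>A\<^esub>\<close> exactly when \<open>S \<subseteq> X \<triangle> C\<close>.
  Hence \<open>\<F>(\<S>,h\<^sub>A)\<close> is the image under \<open>X \<mapsto> X \<triangle> C\<close> of the down-set \<open>\<D>\<close> of those subsets of
  \<open>[n]\<close> that contain no member of \<open>\<S>\<close>. Symmetric difference with a fixed set preserves both the
  cardinality and the shattered sets of a family, and a down-set shatters exactly its own members,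
  so \<open>\<F>(\<S>,h\<^sub>A)\<close> is s-extremal. If \<open>\<D> \<noteq> 2\<^bsup>[n]\<^esup>\<close>, adding a minimal non-member \<open>M\<close> keeps
  \<open>\<D>\<close> a down-set, and every down-set is the family of sets avoiding its (Sperner) family of
  minimal non-members; so \<open>F = M \<triangle> C\<close> is the required new set.\<close>

lemma sym_diff_sym_diff [simp]: "sym_diff C (sym_diff C X) = X"
  by auto

lemma inj_on_sym_diff: "inj_on (sym_diff C) \<F>"
  by (rule inj_onI) (metis sym_diff_sym_diff)

lemma card_image_sym_diff: "card (sym_diff C ` \<F>) = card \<F>"
  by (simp add: card_image inj_on_sym_diff)

lemma mem_image_sym_diff: "X \<in> sym_diff C ` \<F> \<longleftrightarrow> sym_diff C X \<in> \<F>"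
proof
  assume "X \<in> sym_diff C ` \<F>"
  then show "sym_diff C X \<in> \<F>"
    by auto
next
  assume "sym_diff C X \<in> \<F>"
  then show "X \<in> sym_diff C ` \<F>"
    using image_eqI[of X "sym_diff C" "sym_diff C X"] by simp
qed

lemma image_sym_diff_Pow:
  assumes "C \<subseteq> U"
  shows "sym_diff C ` Pow U = Pow U"
proof (rule set_eqI)
  fix X
  have "sym_diff C X \<subseteq> U \<longleftrightarrow> X \<subseteq> U"
    using assms by blast
  then show "X \<in> sym_diff C ` Pow U \<longleftrightarrow> X \<in> Pow U"
    by (simp add: mem_image_sym_diff)
qed

lemma shatters_image_sym_diff:
  assumes "shatters \<F> S"
  shows "shatters (sym_diff C ` \<F>) S"
  unfolding shatters_def
proof
  show "(\<lambda>F. F \<inter> S) ` sym_diff C ` \<F> \<subseteq> Pow S"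
    by auto
  show "Pow S \<subseteq> (\<lambda>F. F \<inter> S) ` sym_diff C ` \<F>"
  proof
    fix T assume T: "T \<in> Pow S"
    then have "sym_diff (C \<inter> S) T \<in> Pow S"
      by auto
    then obtain X where "X \<in> \<F>" "X \<inter> S = sym_diff (C \<inter> S) T"
      using assms unfolding shatters_def by (metis imageE)
    moreover from this T have "sym_diff C X \<inter> S = T"
      by blast
    ultimately show "T \<in> (\<lambda>F. F \<inter> S) ` sym_diff C ` \<F>"
      by blast
  qed
qed

lemma Sh_image_sym_diff: "Sh n (sym_diff C ` \<F>) = Sh n \<F>"
  using shatters_image_sym_diff[of "sym_diff C ` \<F>" _ C] shatters_image_sym_diff[of \<F> _ C]
  unfolding Sh_def by (auto simp: image_image)

definition down_closed :: "'a set set \<Rightarrow> bool" where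
  "down_closed \<D> \<longleftrightarrow> (\<forall>X\<in>\<D>. \<forall>Y. Y \<subseteq> X \<longrightarrow> Y \<in> \<D>)"

lemma down_closedD: "down_closed \<D> \<Longrightarrow> X \<in> \<D> \<Longrightarrow> Y \<subseteq> X \<Longrightarrow> Y \<in> \<D>"
  unfolding down_closed_def by blast

lemma Sh_down_closed:
  assumes "\<D> \<subseteq> Pow {1..n}" and "down_closed \<D>"
  shows "Sh n \<D> = \<D>"
proof -
  have "shatters \<D> S \<longleftrightarrow> S \<in> \<D>" for S
  proof
    assume "shatters \<D> S"
    then have "S \<in> (\<lambda>F. F \<inter> S) ` \<D>"
      unfolding shatters_def by blast
    then obtain X where "X \<in> \<D>" and "S = X \<inter> S"
      by blast
    then show "S \<in> \<D>"
      using down_closedD[OF assms(2)] by blast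
  next
    assume "S \<in> \<D>"
    then have "T \<in> (\<lambda>F. F \<inter> S) ` \<D>" if "T \<subseteq> S" for T
      using that down_closedD[OF assms(2)] by (intro image_eqI[of T _ T]) auto
    then show "shatters \<D> S"
      unfolding shatters_def by auto
  qed
  then show ?thesis
    using assms(1) unfolding Sh_def by auto
qed

lemma s_extremal_image_sym_diff:
  assumes "\<D> \<subseteq> Pow {1..n}" and "down_closed \<D>"
  shows "s_extremal n (sym_diff C ` \<D>)"
  using assms unfolding s_extremal_def
  by (simp add: Sh_image_sym_diff card_image_sym_diff Sh_down_closed)

lemma down_closed_insert_minimal:
  assumes "finite U" and "\<D> \<subseteq> Pow U" and "down_closed \<D>" and "\<D> \<noteq> Pow U"
  obtains M where "M \<subseteq> U" "M \<notin> \<D>" "down_closed (insert M \<D>)"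
proof -
  have "Pow U - \<D> \<noteq> {}"
    using assms(2,4) by auto
  with assms(1) obtain M where M: "M \<in> Pow U - \<D>"
    and minimal: "\<forall>Y\<in>Pow U - \<D>. Y \<subseteq> M \<longrightarrow> M = Y"
    using finite_has_minimal[of "Pow U - \<D>"] by auto
  have "Y \<in> insert M \<D>" if "X \<in> insert M \<D>" and "Y \<subseteq> X" for X Y
  proof (cases "X = M")
    case True
    with that(2) M minimal show ?thesis
      by blast
  next
    case False
    with that show ?thesis
      using down_closedD[OF assms(3)] by blast
  qed
  then have "down_closed (insert M \<D>)"
    unfolding down_closed_def by blast
  with M that show ?thesis
    by blast
qed

definition avoiding :: "nat \<Rightarrow> nat set set \<Rightarrow> nat set set" where
  "avoiding n \<S> = {Z. Z \<subseteq> {1..n} \<and> (\<forall>S\<in>\<S>. \<not> S \<subseteq> Z)}"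

lemma down_closed_avoiding: "down_closed (avoiding n \<S>)"
  unfolding down_closed_def avoiding_def by blast

lemma avoiding_subset_Pow: "avoiding n \<S> \<subseteq> Pow {1..n}"
  unfolding avoiding_def by blast

lemma Q_eq:
  assumes "S \<subseteq> {1..n}" and "H \<subseteq> S"
  shows "Q n S H = {X. X \<subseteq> {1..n} \<and> X \<inter> S = H}"
proof
  show "Q n S H \<subseteq> {X. X \<subseteq> {1..n} \<and> X \<inter> S = H}"
    unfolding Q_def using assms by blast
  show "{X. X \<subseteq> {1..n} \<and> X \<inter> S = H} \<subseteq> Q n S H"
  proof
    fix X assume "X \<in> {X. X \<subseteq> {1..n} \<and> X \<inter> S = H}"
    then have "X = H \<union> (X - S)" and "X - S \<subseteq> {1..n} - S"
      by auto
    then show "X \<in> Q n S H"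
      unfolding Q_def by blast
  qed
qed

lemma inter_eq_iff_subset_sym_diff:
  assumes "S \<subseteq> U"
  shows "X \<inter> S = S \<inter> A \<longleftrightarrow> S \<subseteq> sym_diff (U - A) X"
  using assms by blast

lemma FF_inter_eq_image_avoiding:
  assumes "\<S> \<subseteq> Pow {1..n}"
  shows "FF n \<S> (\<lambda>S. S \<inter> A) = sym_diff ({1..n} - A) ` avoiding n \<S>"
proof (rule set_eqI)
  fix X
  let ?C = "{1..n} - A"
  have "X \<in> Q n S (S \<inter> A) \<longleftrightarrow> X \<subseteq> {1..n} \<and> S \<subseteq> sym_diff ?C X" if "S \<in> \<S>" for S
  proof -
    have "S \<subseteq> {1..n}"
      using that assms by blast
    then show ?thesis
      by (simp add: Q_eq inter_eq_iff_subset_sym_diff)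
  qed
  moreover have "sym_diff ?C X \<subseteq> {1..n} \<longleftrightarrow> X \<subseteq> {1..n}"
    by blast
  ultimately show "X \<in> FF n \<S> (\<lambda>S. S \<inter> A) \<longleftrightarrow> X \<in> sym_diff ?C ` avoiding n \<S>"
    unfolding FF_def avoiding_def mem_image_sym_diff by auto
qed

definition minimal_nonmembers :: "nat \<Rightarrow> nat set set \<Rightarrow> nat set set" where
  "minimal_nonmembers n \<D> = {M. M \<subseteq> {1..n} \<and> M \<notin> \<D> \<and> (\<forall>Y. Y \<subset> M \<longrightarrow> Y \<in> \<D>)}"

lemma minimal_nonmembers_subset_Pow: "minimal_nonmembers n \<D> \<subseteq> Pow {1..n}"
  unfolding minimal_nonmembers_def by blast

lemma sperner_minimal_nonmembers: "sperner (minimal_nonmembers n \<D>)"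
  unfolding sperner_def minimal_nonmembers_def by blast

lemma avoiding_minimal_nonmembers:
  assumes "\<D> \<subseteq> Pow {1..n}" and "down_closed \<D>"
  shows "avoiding n (minimal_nonmembers n \<D>) = \<D>"
proof
  show "\<D> \<subseteq> avoiding n (minimal_nonmembers n \<D>)"
  proof
    fix Z assume "Z \<in> \<D>"
    then have "S \<notin> minimal_nonmembers n \<D>" if "S \<subseteq> Z" for S
      using that down_closedD[OF assms(2)] unfolding minimal_nonmembers_def by blast
    with \<open>Z \<in> \<D>\<close> assms(1) show "Z \<in> avoiding n (minimal_nonmembers n \<D>)"
      unfolding avoiding_def by blast
  qed
  show "avoiding n (minimal_nonmembers n \<D>) \<subseteq> \<D>"
  proof
    fix Z assume Z: "Z \<in> avoiding n (minimal_nonmembers n \<D>)"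
    show "Z \<in> \<D>"
    proof (rule ccontr)
      assume "Z \<notin> \<D>"
      have "Z \<subseteq> {1..n}"
        using Z unfolding avoiding_def by blast
      then have "finite (Pow Z - \<D>)"
        using finite_subset by blast
      with \<open>Z \<notin> \<D>\<close> obtain M where M: "M \<in> Pow Z - \<D>"
        and minimal: "\<forall>Y\<in>Pow Z - \<D>. Y \<subseteq> M \<longrightarrow> M = Y"
        using finite_has_minimal[of "Pow Z - \<D>"] by blast
      have "Y \<in> \<D>" if "Y \<subset> M" for Y
        using that M minimal by blast
      with M \<open>Z \<subseteq> {1..n}\<close> have "M \<in> minimal_nonmembers n \<D>"
        unfolding minimal_nonmembers_def by blast
      with M Z show False
        unfolding avoiding_def by blast
    qed
  qed
qed

lemma ex_sperner_FF_eq_image_sym_diff: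
  assumes "\<D> \<subseteq> Pow {1..n}" and "down_closed \<D>"
  shows "\<exists>\<S>. \<S> \<subseteq> Pow {1..n} \<and> sperner \<S> \<and>
    sym_diff ({1..n} - A) ` \<D> = FF n \<S> (\<lambda>S. S \<inter> A)"
proof (intro exI conjI)
  show "minimal_nonmembers n \<D> \<subseteq> Pow {1..n}"
    by (rule minimal_nonmembers_subset_Pow)
  show "sperner (minimal_nonmembers n \<D>)"
    by (rule sperner_minimal_nonmembers)
  show "sym_diff ({1..n} - A) ` \<D> = FF n (minimal_nonmembers n \<D>) (\<lambda>S. S \<inter> A)"
    using FF_inter_eq_image_avoiding[OF minimal_nonmembers_subset_Pow]
      avoiding_minimal_nonmembers[OF assms] by simp
qed

lemma extend_image_sym_diff_down_closed:
  assumes "\<D> \<subseteq> Pow {1..n}" and "down_closed \<D>"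
    and "sym_diff ({1..n} - A) ` \<D> \<noteq> Pow {1..n}"
  shows "\<exists>F. F \<subseteq> {1..n} \<and> F \<notin> sym_diff ({1..n} - A) ` \<D> \<and>
    s_extremal n (sym_diff ({1..n} - A) ` \<D> \<union> {F}) \<and>
    (\<exists>\<S>. \<S> \<subseteq> Pow {1..n} \<and> sperner \<S> \<and>
       sym_diff ({1..n} - A) ` \<D> \<union> {F} = FF n \<S> (\<lambda>S. S \<inter> A))"
proof -
  let ?C = "{1..n} - A"
  have "\<D> \<noteq> Pow {1..n}"
    by (rule contrapos_nn[OF assms(3)]) (simp add: image_sym_diff_Pow)
  then obtain M where M: "M \<subseteq> {1..n}" "M \<notin> \<D>" "down_closed (insert M \<D>)"
    using down_closed_insert_minimal[OF finite_atLeastAtMost assms(1,2)] by blast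
  have M_Pow: "insert M \<D> \<subseteq> Pow {1..n}"
    using M(1) assms(1) by blast
  obtain \<S> where \<S>: "\<S> \<subseteq> Pow {1..n}" "sperner \<S>"
    "sym_diff ?C ` insert M \<D> = FF n \<S> (\<lambda>S. S \<inter> A)"
    using ex_sperner_FF_eq_image_sym_diff[OF M_Pow M(3), of A] by blast
  have extended: "sym_diff ?C ` \<D> \<union> {sym_diff ?C M} = sym_diff ?C ` insert M \<D>"
    by simp
  show ?thesis
  proof (intro exI conjI)
    show "sym_diff ?C M \<subseteq> {1..n}"
      using M(1) by blast
    show "sym_diff ?C M \<notin> sym_diff ?C ` \<D>"
      unfolding mem_image_sym_diff using M(2) by simp
    show "s_extremal n (sym_diff ?C ` \<D> \<union> {sym_diff ?C M})"
      unfolding extended using M_Pow M(3) by (rule s_extremal_image_sym_diff)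
    show "sym_diff ?C ` \<D> \<union> {sym_diff ?C M} = FF n \<S> (\<lambda>S. S \<inter> A)"
      unfolding extended by (rule \<S>(3))
  qed (use \<S> in auto)
qed

theorem theorem9:
  fixes n :: nat and \<S> :: "nat set set" and A :: "nat set"
  assumes "\<S> \<subseteq> Pow {1..n}" and "sperner \<S>" and "A \<subseteq> {1..n}"
  shows "s_extremal n (FF n \<S> (\<lambda>S. S \<inter> A)) \<and>
    (FF n \<S> (\<lambda>S. S \<inter> A) \<noteq> Pow {1..n} \<longrightarrow>
      (\<exists>F. F \<subseteq> {1..n} \<and> F \<notin> FF n \<S> (\<lambda>S. S \<inter> A) \<and>
         s_extremal n (FF n \<S> (\<lambda>S. S \<inter> A) \<union> {F}) \<and>
         (\<exists>\<S>'. \<S>' \<subseteq> Pow {1..n} \<and> sperner \<S>' \<and>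
            FF n \<S> (\<lambda>S. S \<inter> A) \<union> {F} = FF n \<S>' (\<lambda>S. S \<inter> A))))"
proof -
  have FF_eq: "FF n \<S> (\<lambda>S. S \<inter> A) = sym_diff ({1..n} - A) ` avoiding n \<S>"
    using assms(1) by (rule FF_inter_eq_image_avoiding)
  note D = avoiding_subset_Pow[of n \<S>] down_closed_avoiding[of n \<S>]
  show ?thesis
    unfolding FF_eq
    by (intro conjI impI s_extremal_image_sym_diff[OF D] extend_image_sym_diff_down_closed[OF D])
qed

end
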